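(* Let $f:[0,1]\to\mathbb{R}$ be continuous. The following are equivalent: (1) $f$ is completely non-Hölder; (2) for every non-constant polynomial $P\in\mathbb{R}[t]$, there is no point $x_0\in[0,1]$ at which $P\circ f$ has a one-sided (left or right) derivative equal to $0$; (3) for every function $F$ that is real-analytic and non-constant on an open interval containing $f([0,1])$, the function $F\circ f$ is completely non-Hölder.
   Context: For $\alpha>0$, a function $g:[0,1]\to\mathbb{R}$ is called $\alpha$-Hölder at $x_0$ from the right if $\limsup_{y\searrow x_0}\frac{|g(y)-g(x_0)|}{|y-x_0|^\alpha}<\infty$, and $\alpha$-Hölder at $x_0$ from the left if $\limsup_{y\nearrow x_0}\frac{|g(y)-g(x_0)|}{|y-x_0|^\alpha}<\infty$. The function $g$ is called completely non-Hölder if there is no $x_0\in[0,1]$ and no $\alpha>0$ such that $g$ is $\alpha$-Hölder at $x_0$ from the left or from the right. *)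

theory Defs
  imports "HOL-Analysis.Analysis" "HOL-Computational_Algebra.Polynomial"
begin

definition holder_right :: "(real \<Rightarrow> real) \<Rightarrow> real \<Rightarrow> real \<Rightarrow> bool" where
  "holder_right g \<alpha> x0 \<longleftrightarrow> 0 \<le> x0 \<and> x0 < 1 \<and>
     Limsup (at_right x0) (\<lambda>y. ereal (\<bar>g y - g x0\<bar> / \<bar>y - x0\<bar> powr \<alpha>)) < \<infinity>"

definition holder_left :: "(real \<Rightarrow> real) \<Rightarrow> real \<Rightarrow> real \<Rightarrow> bool" where
  "holder_left g \<alpha> x0 \<longleftrightarrow> 0 < x0 \<and> x0 \<le> 1 \<and>
     Limsup (at_left x0) (\<lambda>y. ereal (\<bar>g y - g x0\<bar> / \<bar>y - x0\<bar> powr \<alpha>)) < \<infinity>"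

definition completely_non_holder :: "(real \<Rightarrow> real) \<Rightarrow> bool" where
  "completely_non_holder g \<longleftrightarrow>
     \<not> (\<exists>x0\<in>{0..1}. \<exists>\<alpha>>0. holder_left g \<alpha> x0 \<or> holder_right g \<alpha> x0)"

definition real_analytic_on :: "(real \<Rightarrow> real) \<Rightarrow> real set \<Rightarrow> bool" where
  "real_analytic_on F S \<longleftrightarrow>
     (\<forall>x\<in>S. \<exists>r>0. \<exists>a::nat \<Rightarrow> real. \<forall>y. \<bar>y - x\<bar> < r \<longrightarrow> (\<lambda>n. a n * (y - x) ^ n) sums F y)"

end

theory Submission
  imports Defs
begin

(*
  If f is alpha-Hoelder on one side of x0 and k * alpha > 1, then P t = (t - f x0)^k makes P o f
  flat there: it has one-sided derivative 0. Conversely, near c = f x0 a non-constant polynomial P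
  satisfies |P t - P c| >= m |t - c|^k for some m > 0 and k >= 1, so a flat P o f, being
  1-Hoelder, forces f to be (1/k)-Hoelder. The same lower bound holds for a real-analytic F at every
  point where F is not locally constant, and by the identity theorem a non-constant F on an interval
  is nowhere locally constant; so an alpha-Hoelder F o f forces f to be (alpha/k)-Hoelder.
  Taking F the identity gives the remaining implication.
*)

section \<open>One-sided Hoelder bounds\<close>

definition holder_along :: "(real \<Rightarrow> real) \<Rightarrow> real \<Rightarrow> real \<Rightarrow> real filter \<Rightarrow> bool" where
  "holder_along g \<alpha> x0 F \<longleftrightarrow> (\<exists>C. \<forall>\<^sub>F y in F. \<bar>g y - g x0\<bar> \<le> C * \<bar>y - x0\<bar> powr \<alpha>)"

lemma Limsup_holder_quotient_less_infinity_iff: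
  assumes punctured: "\<forall>\<^sub>F y in F. y \<noteq> x0"
  shows "Limsup F (\<lambda>y. ereal (\<bar>g y - g x0\<bar> / \<bar>y - x0\<bar> powr \<alpha>)) < \<infinity> \<longleftrightarrow> holder_along g \<alpha> x0 F"
proof -
  have quotient_le_iff: "\<bar>g y - g x0\<bar> / \<bar>y - x0\<bar> powr \<alpha> \<le> C \<longleftrightarrow> \<bar>g y - g x0\<bar> \<le> C * \<bar>y - x0\<bar> powr \<alpha>"
    if "y \<noteq> x0" for y C
    using that by (simp add: divide_le_eq)
  show ?thesis
  proof
    assume "Limsup F (\<lambda>y. ereal (\<bar>g y - g x0\<bar> / \<bar>y - x0\<bar> powr \<alpha>)) < \<infinity>"
    then obtain n :: nat where "Limsup F (\<lambda>y. ereal (\<bar>g y - g x0\<bar> / \<bar>y - x0\<bar> powr \<alpha>)) < real n"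
      using less_PInf_Ex_of_nat by (metis less_irrefl)
    from Limsup_lessD[OF this] have "\<forall>\<^sub>F y in F. \<bar>g y - g x0\<bar> / \<bar>y - x0\<bar> powr \<alpha> < real n"
      by simp
    with punctured have "\<forall>\<^sub>F y in F. \<bar>g y - g x0\<bar> \<le> real n * \<bar>y - x0\<bar> powr \<alpha>"
      by eventually_elim (simp add: quotient_le_iff[symmetric] less_imp_le)
    then show "holder_along g \<alpha> x0 F"
      unfolding holder_along_def by blast
  next
    assume "holder_along g \<alpha> x0 F"
    then obtain C where "\<forall>\<^sub>F y in F. \<bar>g y - g x0\<bar> \<le> C * \<bar>y - x0\<bar> powr \<alpha>"
      unfolding holder_along_def by blast
    with punctured have "\<forall>\<^sub>F y in F. ereal (\<bar>g y - g x0\<bar> / \<bar>y - x0\<bar> powr \<alpha>) \<le> ereal C"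
      by eventually_elim (simp add: quotient_le_iff)
    then show "Limsup F (\<lambda>y. ereal (\<bar>g y - g x0\<bar> / \<bar>y - x0\<bar> powr \<alpha>)) < \<infinity>"
      by (rule le_less_trans[OF Limsup_bounded]) simp
  qed
qed

definition unit_interval_side :: "real \<Rightarrow> real set \<Rightarrow> bool" where
  "unit_interval_side x0 S \<longleftrightarrow>
     (0 \<le> x0 \<and> x0 < 1 \<and> S = {x0<..}) \<or> (0 < x0 \<and> x0 \<le> 1 \<and> S = {..<x0})"

lemma unit_interval_side_mem: "unit_interval_side x0 S \<Longrightarrow> x0 \<in> {0..1}"
  by (auto simp: unit_interval_side_def)

lemma one_sided_at_unit_interval_iff:
  "(\<exists>x0\<in>{0..1}. (x0 < 1 \<and> P x0 (at_right x0)) \<or> (0 < x0 \<and> P x0 (at_left x0))) \<longleftrightarrow>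
   (\<exists>x0 S. unit_interval_side x0 S \<and> P x0 (at x0 within S))"
proof
  assume "\<exists>x0\<in>{0..1}. (x0 < 1 \<and> P x0 (at_right x0)) \<or> (0 < x0 \<and> P x0 (at_left x0))"
  then obtain x0 where "x0 \<in> {0..1}" and "(x0 < 1 \<and> P x0 (at_right x0)) \<or> (0 < x0 \<and> P x0 (at_left x0))"
    by blast
  then show "\<exists>x0 S. unit_interval_side x0 S \<and> P x0 (at x0 within S)"
  proof (elim disjE conjE)
    assume "x0 < 1" "P x0 (at_right x0)"
    with \<open>x0 \<in> {0..1}\<close> show ?thesis
      unfolding unit_interval_side_def by (intro exI[of _ x0] exI[of _ "{x0<..}"]) auto
  next
    assume "0 < x0" "P x0 (at_left x0)"
    with \<open>x0 \<in> {0..1}\<close> show ?thesis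
      unfolding unit_interval_side_def by (intro exI[of _ x0] exI[of _ "{..<x0}"]) auto
  qed
next
  assume "\<exists>x0 S. unit_interval_side x0 S \<and> P x0 (at x0 within S)"
  then show "\<exists>x0\<in>{0..1}. (x0 < 1 \<and> P x0 (at_right x0)) \<or> (0 < x0 \<and> P x0 (at_left x0))"
    unfolding unit_interval_side_def by auto
qed

lemma holder_right_iff_holder_along:
  "holder_right g \<alpha> x0 \<longleftrightarrow> 0 \<le> x0 \<and> x0 < 1 \<and> holder_along g \<alpha> x0 (at_right x0)"
  unfolding holder_right_def Limsup_holder_quotient_less_infinity_iff[OF eventually_neq_at_within] ..

lemma holder_left_iff_holder_along:
  "holder_left g \<alpha> x0 \<longleftrightarrow> 0 < x0 \<and> x0 \<le> 1 \<and> holder_along g \<alpha> x0 (at_left x0)"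
  unfolding holder_left_def Limsup_holder_quotient_less_infinity_iff[OF eventually_neq_at_within] ..

lemma completely_non_holder_iff_sides:
  "completely_non_holder g \<longleftrightarrow>
     \<not> (\<exists>x0 S. unit_interval_side x0 S \<and> (\<exists>\<alpha>>0. holder_along g \<alpha> x0 (at x0 within S)))"
proof -
  have "completely_non_holder g \<longleftrightarrow>
     \<not> (\<exists>x0\<in>{0..1}. (x0 < 1 \<and> (\<exists>\<alpha>>0. holder_along g \<alpha> x0 (at_right x0))) \<or>
                     (0 < x0 \<and> (\<exists>\<alpha>>0. holder_along g \<alpha> x0 (at_left x0))))"
    unfolding completely_non_holder_def holder_left_iff_holder_along holder_right_iff_holder_along
    by auto
  then show ?thesis
    using one_sided_at_unit_interval_iff[where P = "\<lambda>x0 F. \<exists>\<alpha>>0. holder_along g \<alpha> x0 F"] by simp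
qed

lemma tendsto_at_unit_interval_side:
  assumes "continuous_on {0..1} f" "unit_interval_side x0 S"
  shows "(f \<longlongrightarrow> f x0) (at x0 within S)"
  using assms(2) unfolding unit_interval_side_def
proof (elim disjE conjE)
  assume "0 \<le> x0" "x0 < 1" "S = {x0<..}"
  then have "(f \<longlongrightarrow> f x0) (at x0 within {0..1})"
    using assms(1) by (simp add: continuous_on_def)
  then have "(f \<longlongrightarrow> f x0) (at x0 within {x0..1})"
    by (rule tendsto_within_subset) (use \<open>0 \<le> x0\<close> in auto)
  then show ?thesis
    using at_within_Icc_at_right[OF \<open>x0 < 1\<close>] \<open>S = {x0<..}\<close> by simp
next
  assume "0 < x0" "x0 \<le> 1" "S = {..<x0}"
  then have "(f \<longlongrightarrow> f x0) (at x0 within {0..1})"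
    using assms(1) by (simp add: continuous_on_def)
  then have "(f \<longlongrightarrow> f x0) (at x0 within {0..x0})"
    by (rule tendsto_within_subset) (use \<open>x0 \<le> 1\<close> in auto)
  then show ?thesis
    using at_within_Icc_at_left[OF \<open>0 < x0\<close>] \<open>S = {..<x0}\<close> by simp
qed

lemma zero_derivative_imp_holder_along_one:
  assumes "(g has_real_derivative 0) (at x0 within S)"
  shows "holder_along g 1 x0 (at x0 within S)"
proof -
  have "((\<lambda>y. (g y - g x0) / (y - x0)) \<longlongrightarrow> 0) (at x0 within S)"
    using assms by (simp add: has_field_derivative_iff)
  from tendstoD[OF this, of 1] have "\<forall>\<^sub>F y in at x0 within S. \<bar>(g y - g x0) / (y - x0)\<bar> < 1"
    by (simp add: dist_real_def)
  moreover have "\<forall>\<^sub>F y in at x0 within S. y \<noteq> x0"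
    by (simp add: eventually_at_filter)
  ultimately have "\<forall>\<^sub>F y in at x0 within S. \<bar>g y - g x0\<bar> \<le> 1 * \<bar>y - x0\<bar> powr 1"
    by eventually_elim (simp add: divide_less_eq)
  then show ?thesis
    unfolding holder_along_def by blast
qed

lemma holder_along_imp_zero_derivative_power:
  assumes holder: "holder_along f \<alpha> x0 (at x0 within S)" and k\<alpha>: "1 < real k * \<alpha>"
  shows "((\<lambda>y. (f y - f x0) ^ k) has_real_derivative 0) (at x0 within S)"
proof -
  have "0 < k"
    using k\<alpha> by (cases k) auto
  obtain C where C: "\<forall>\<^sub>F y in at x0 within S. \<bar>f y - f x0\<bar> \<le> C * \<bar>y - x0\<bar> powr \<alpha>"
    using holder unfolding holder_along_def by blast
  have "\<forall>\<^sub>F y in at x0 within S. y \<noteq> x0"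
    by (simp add: eventually_at_filter)
  with C have bound: "\<forall>\<^sub>F y in at x0 within S.
      norm (((f y - f x0) ^ k - (f x0 - f x0) ^ k) / (y - x0)) \<le> \<bar>C\<bar> ^ k * \<bar>y - x0\<bar> powr (real k * \<alpha> - 1)"
  proof eventually_elim
    case (elim y)
    then have pos: "0 < \<bar>y - x0\<bar>"
      by simp
    have "\<bar>f y - f x0\<bar> \<le> \<bar>C\<bar> * \<bar>y - x0\<bar> powr \<alpha>"
      using elim(1) by (meson abs_ge_self mult_right_mono order_trans powr_ge_zero)
    then have "\<bar>f y - f x0\<bar> ^ k \<le> (\<bar>C\<bar> * \<bar>y - x0\<bar> powr \<alpha>) ^ k"
      by (simp add: power_mono)
    also have "\<dots> = \<bar>C\<bar> ^ k * \<bar>y - x0\<bar> powr (real k * \<alpha>)"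
      using pos by (simp add: power_mult_distrib powr_realpow[symmetric] powr_powr mult.commute)
    finally have *: "\<bar>f y - f x0\<bar> ^ k \<le> \<bar>C\<bar> ^ k * \<bar>y - x0\<bar> powr (real k * \<alpha>)" .
    have "norm (((f y - f x0) ^ k - (f x0 - f x0) ^ k) / (y - x0)) = \<bar>f y - f x0\<bar> ^ k / \<bar>y - x0\<bar>"
      using \<open>0 < k\<close> by (simp add: power_abs power_0_left)
    also have "\<dots> \<le> \<bar>C\<bar> ^ k * \<bar>y - x0\<bar> powr (real k * \<alpha>) / \<bar>y - x0\<bar>"
      using * by (simp add: divide_right_mono)
    also have "\<dots> = \<bar>C\<bar> ^ k * \<bar>y - x0\<bar> powr (real k * \<alpha> - 1)"
      using pos by (simp add: powr_diff)
    finally show ?case .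
  qed
  have "((\<lambda>y. \<bar>y - x0\<bar>) \<longlongrightarrow> 0) (at x0 within S)"
    by (intro tendsto_eq_intros) auto
  then have "((\<lambda>y. \<bar>y - x0\<bar> powr (real k * \<alpha> - 1)) \<longlongrightarrow> 0) (at x0 within S)"
    using k\<alpha> by (intro tendsto_zero_powrI) auto
  then have "((\<lambda>y. \<bar>C\<bar> ^ k * \<bar>y - x0\<bar> powr (real k * \<alpha> - 1)) \<longlongrightarrow> 0) (at x0 within S)"
    by (rule tendsto_mult_right_zero)
  with bound have "((\<lambda>y. ((f y - f x0) ^ k - (f x0 - f x0) ^ k) / (y - x0)) \<longlongrightarrow> 0) (at x0 within S)"
    by (rule Lim_null_comparison)
  then show ?thesis
    by (simp add: has_field_derivative_iff)
qed

section \<open>Lower bounds near a zero of finite order\<close>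

definition vanishing_order_le :: "(real \<Rightarrow> real) \<Rightarrow> real \<Rightarrow> nat \<Rightarrow> bool" where
  "vanishing_order_le H c k \<longleftrightarrow> (\<exists>m>0. \<forall>\<^sub>F t in nhds c. m * \<bar>t - c\<bar> ^ k \<le> \<bar>H t - H c\<bar>)"

lemma factorization_imp_vanishing_order_le:
  assumes factor: "\<forall>\<^sub>F t in nhds c. H t - H c = (t - c) ^ k * G t"
    and "isCont G c" "G c \<noteq> 0"
  shows "vanishing_order_le H c k"
proof -
  have "(G \<longlongrightarrow> G c) (at c)"
    using \<open>isCont G c\<close> by (simp add: isCont_def)
  then have "\<forall>\<^sub>F t in at c. dist (G t) (G c) < \<bar>G c\<bar> / 2"
    using \<open>G c \<noteq> 0\<close> by (intro tendstoD) auto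
  then have "\<forall>\<^sub>F t in nhds c. dist (G t) (G c) < \<bar>G c\<bar> / 2"
    using \<open>G c \<noteq> 0\<close> by (simp add: eventually_nhds_conv_at)
  with factor have "\<forall>\<^sub>F t in nhds c. \<bar>G c\<bar> / 2 * \<bar>t - c\<bar> ^ k \<le> \<bar>H t - H c\<bar>"
  proof eventually_elim
    case (elim t)
    then have "\<bar>G c\<bar> / 2 \<le> \<bar>G t\<bar>"
      by (simp add: dist_real_def) (smt (verit))
    then have "\<bar>G c\<bar> / 2 * \<bar>t - c\<bar> ^ k \<le> \<bar>G t\<bar> * \<bar>t - c\<bar> ^ k"
      by (rule mult_right_mono) simp
    with elim(1) show ?case
      by (simp add: abs_mult power_abs mult.commute)
  qed
  then show ?thesis
    unfolding vanishing_order_le_def using \<open>G c \<noteq> 0\<close> by (intro exI[of _ "\<bar>G c\<bar> / 2"]) auto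
qed

lemma vanishing_order_le_imp_isolated:
  assumes "vanishing_order_le H c k"
  shows "\<forall>\<^sub>F t in at c. H t \<noteq> H c"
proof -
  obtain m where "m > 0" and bound: "\<forall>\<^sub>F t in at c. m * \<bar>t - c\<bar> ^ k \<le> \<bar>H t - H c\<bar>"
    using assms unfolding vanishing_order_le_def eventually_nhds_conv_at by blast
  have "\<forall>\<^sub>F t in at c. t \<noteq> c"
    by (simp add: eventually_at_filter)
  with bound show ?thesis
  proof eventually_elim
    case (elim t)
    have "0 < m * \<bar>t - c\<bar> ^ k"
      using \<open>m > 0\<close> elim(2) by simp
    with elim(1) show ?case
      by auto
  qed
qed

lemma holder_along_comp_imp_holder_along:
  assumes lim: "(f \<longlongrightarrow> f x0) F" and order: "vanishing_order_le H (f x0) k" and "1 \<le> k"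
    and holder: "holder_along (\<lambda>y. H (f y)) \<alpha> x0 F"
  shows "holder_along f (\<alpha> / k) x0 F"
proof -
  obtain m where "m > 0" and near: "\<forall>\<^sub>F t in nhds (f x0). m * \<bar>t - f x0\<bar> ^ k \<le> \<bar>H t - H (f x0)\<bar>"
    using order unfolding vanishing_order_le_def by blast
  obtain C where C: "\<forall>\<^sub>F y in F. \<bar>H (f y) - H (f x0)\<bar> \<le> C * \<bar>y - x0\<bar> powr \<alpha>"
    using holder unfolding holder_along_def by blast
  have "\<forall>\<^sub>F y in F. m * \<bar>f y - f x0\<bar> ^ k \<le> \<bar>H (f y) - H (f x0)\<bar>"
    using eventually_compose_filterlim[OF near lim] .
  with C have "\<forall>\<^sub>F y in F. \<bar>f y - f x0\<bar> \<le> (max C 0 / m) powr (1 / k) * \<bar>y - x0\<bar> powr (\<alpha> / k)"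
  proof eventually_elim
    case (elim y)
    have "\<bar>f y - f x0\<bar> ^ k \<le> max C 0 / m * \<bar>y - x0\<bar> powr \<alpha>"
      using elim \<open>m > 0\<close> by (simp add: field_simps) (smt (verit) mult_right_mono powr_ge_zero)
    then have "(\<bar>f y - f x0\<bar> ^ k) powr (1 / k) \<le> (max C 0 / m * \<bar>y - x0\<bar> powr \<alpha>) powr (1 / k)"
      by (simp add: powr_mono2)
    also have "\<dots> = (max C 0 / m) powr (1 / k) * \<bar>y - x0\<bar> powr (\<alpha> / k)"
      using \<open>m > 0\<close> by (subst powr_mult) (auto simp: powr_powr)
    moreover have "(\<bar>f y - f x0\<bar> ^ k) powr (1 / k) = \<bar>f y - f x0\<bar>"
      using \<open>1 \<le> k\<close> by (subst powr_realpow'[symmetric]) (auto simp: powr_powr)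
    ultimately show ?case
      by simp
  qed
  then show ?thesis
    unfolding holder_along_def by blast
qed

lemma vanishing_order_le_poly:
  fixes P :: "real poly"
  assumes "0 < degree P"
  obtains k where "1 \<le> k" "vanishing_order_le (poly P) c k"
proof -
  define Q where "Q = P - [:poly P c:]"
  have "Q \<noteq> 0"
    using assms by (auto simp: Q_def) (metis degree_pCons_0 less_irrefl)
  obtain q where decomp: "Q = [:- c, 1:] ^ order c Q * q" and "\<not> [:- c, 1:] dvd q"
    using order_decomp[OF \<open>Q \<noteq> 0\<close>] by blast
  have "1 \<le> order c Q"
    using \<open>Q \<noteq> 0\<close> order_root[of Q c] by (simp add: Q_def)
  moreover have "poly q c \<noteq> 0"
    using \<open>\<not> [:- c, 1:] dvd q\<close> by (simp add: poly_eq_0_iff_dvd)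
  moreover have "poly P t - poly P c = (t - c) ^ order c Q * poly q t" for t
  proof -
    have "poly P t - poly P c = poly Q t"
      by (simp add: Q_def)
    also have "\<dots> = (t - c) ^ order c Q * poly q t"
      by (subst decomp) (simp add: poly_power)
    finally show ?thesis .
  qed
  ultimately have "vanishing_order_le (poly P) c (order c Q)"
    by (intro factorization_imp_vanishing_order_le[where G = "poly q"] always_eventually) auto
  with \<open>1 \<le> order c Q\<close> show ?thesis
    by (rule that)
qed

section \<open>Real-analytic functions\<close>

lemma isCont_powser_centered:
  fixes a :: "nat \<Rightarrow> real"
  assumes "summable (\<lambda>n. a n * \<rho> ^ n)" "\<rho> \<noteq> 0"
  shows "isCont (\<lambda>y. \<Sum>n. a n * (y - x) ^ n) x"
proof -
  have "isCont (\<lambda>z. \<Sum>n. a n * z ^ n) (x - x)"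
    using assms by (intro isCont_powser) auto
  then show ?thesis
    using isCont_o2[where f = "\<lambda>y. y - x" and a = x] by simp
qed

lemma real_analytic_on_imp_isCont:
  assumes "real_analytic_on F I" "x \<in> I"
  shows "isCont F x"
proof -
  obtain r a where "0 < r" and sums: "\<And>y. \<bar>y - x\<bar> < r \<Longrightarrow> (\<lambda>n. a n * (y - x) ^ n) sums F y"
    using assms unfolding real_analytic_on_def by blast
  have near: "\<forall>\<^sub>F y in nhds x. F y = (\<Sum>n. a n * (y - x) ^ n)"
    using eventually_nhds_ball[OF \<open>0 < r\<close>, of x]
  proof eventually_elim
    case (elim y)
    then show ?case
      using sums[of y] by (simp add: dist_real_def abs_minus_commute sums_iff)
  qed
  have "summable (\<lambda>n. a n * (r / 2) ^ n)"
    using sums[of "x + r / 2"] \<open>0 < r\<close> by (simp add: sums_iff)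
  then have "isCont (\<lambda>y. \<Sum>n. a n * (y - x) ^ n) x"
    using \<open>0 < r\<close> by (intro isCont_powser_centered) auto
  then show ?thesis
    using isCont_cong[OF near] by simp
qed

lemma powser_tail_sums:
  fixes a :: "nat \<Rightarrow> real"
  assumes sums: "(\<lambda>n. a n * h ^ n) sums s" and "h \<noteq> 0" "1 \<le> k"
    and below: "\<And>n. 1 \<le> n \<Longrightarrow> n < k \<Longrightarrow> a n = 0"
  shows "(\<lambda>n. a (n + k) * h ^ n) sums ((s - a 0) / h ^ k)"
proof -
  have "(\<Sum>i<k. a i * h ^ i) = (\<Sum>i\<in>{0}. a i * h ^ i)"
    by (rule sum.mono_neutral_right) (use \<open>1 \<le> k\<close> below in auto)
  with sums have "(\<lambda>n. a (n + k) * h ^ (n + k)) sums (s - a 0)"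
    using sums_iff_shift[of "\<lambda>n. a n * h ^ n" k "s - a 0"] by simp
  then have "(\<lambda>n. a (n + k) * h ^ (n + k) / h ^ k) sums ((s - a 0) / h ^ k)"
    by (rule sums_divide)
  then show ?thesis
    using \<open>h \<noteq> 0\<close> by (simp add: power_add)
qed

lemma vanishing_order_le_powser:
  fixes a :: "nat \<Rightarrow> real"
  assumes "0 < r" and sums: "\<And>y. \<bar>y - x\<bar> < r \<Longrightarrow> (\<lambda>n. a n * (y - x) ^ n) sums F y"
    and "1 \<le> k" "a k \<noteq> 0" and below: "\<And>n. 1 \<le> n \<Longrightarrow> n < k \<Longrightarrow> a n = 0"
  shows "vanishing_order_le F x k"
proof -
  define G where "G y = (\<Sum>n. a (n + k) * (y - x) ^ n)" for y
  have "(\<lambda>n. a n * (x - x) ^ n) sums F x"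
    using sums[of x] \<open>0 < r\<close> by simp
  then have "F x = a 0"
    using powser_sums_zero[of a] by (simp add: sums_iff)
  have tail_sums: "(\<lambda>n. a (n + k) * (y - x) ^ n) sums ((F y - F x) / (y - x) ^ k)"
    if "\<bar>y - x\<bar> < r" "y \<noteq> x" for y
    using powser_tail_sums[OF sums[OF that(1)]] that(2) \<open>1 \<le> k\<close> below \<open>F x = a 0\<close> by simp
  have factor: "F y - F x = (y - x) ^ k * G y" if "\<bar>y - x\<bar> < r" for y
  proof (cases "y = x")
    case True
    then show ?thesis
      using \<open>1 \<le> k\<close> by simp
  next
    case False
    then have "G y = (F y - F x) / (y - x) ^ k"
      unfolding G_def using tail_sums[OF that False] by (simp add: sums_iff)
    then show ?thesis
      using False by simp
  qed
  have "summable (\<lambda>n. a (n + k) * (r / 2) ^ n)"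
    using tail_sums[of "x + r / 2"] \<open>0 < r\<close> by (simp add: sums_iff)
  then have "isCont G x"
    unfolding G_def using isCont_powser_centered \<open>0 < r\<close> by simp
  moreover have "G x \<noteq> 0"
    using \<open>a k \<noteq> 0\<close> by (simp add: G_def)
  moreover have "\<forall>\<^sub>F y in nhds x. F y - F x = (y - x) ^ k * G y"
    using eventually_nhds_ball[OF \<open>0 < r\<close>, of x]
    by eventually_elim (simp add: factor dist_real_def abs_minus_commute)
  ultimately show ?thesis
    by (intro factorization_imp_vanishing_order_le)
qed

lemma real_analytic_on_cases:
  assumes "real_analytic_on F I" "x \<in> I"
  shows "(\<forall>\<^sub>F y in nhds x. F y = F x) \<or> (\<exists>k\<ge>1. vanishing_order_le F x k)"
proof -
  obtain r a where "0 < r" and sums: "\<And>y. \<bar>y - x\<bar> < r \<Longrightarrow> (\<lambda>n. a n * (y - x) ^ n) sums F y"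
    using assms unfolding real_analytic_on_def by blast
  show ?thesis
  proof (cases "\<exists>n\<ge>1. a n \<noteq> 0")
    case True
    define k where "k = (LEAST n. 1 \<le> n \<and> a n \<noteq> 0)"
    have "1 \<le> k" "a k \<noteq> 0"
      using LeastI_ex[OF True] unfolding k_def by auto
    have below: "a n = 0" if "1 \<le> n" "n < k" for n
      using not_less_Least[of n "\<lambda>n. 1 \<le> n \<and> a n \<noteq> 0"] that unfolding k_def by auto
    have "vanishing_order_le F x k"
      using \<open>0 < r\<close> sums \<open>1 \<le> k\<close> \<open>a k \<noteq> 0\<close> below by (rule vanishing_order_le_powser)
    with \<open>1 \<le> k\<close> show ?thesis
      by blast
  next
    case False
    then have "a n = 0" if "n \<noteq> 0" for n
      using that by auto
    then have constant_sum: "(\<lambda>n. a n * (y - x) ^ n) sums a 0" for y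
      using sums_finite[of "{0}" "\<lambda>n. a n * (y - x) ^ n"] by simp
    have "(\<lambda>n. a n * (x - x) ^ n) sums F x"
      using sums[of x] \<open>0 < r\<close> by simp
    then have "F x = a 0"
      using constant_sum by (rule sums_unique2)
    have const: "F y = F x" if "\<bar>y - x\<bar> < r" for y
      using sums_unique2[OF sums[OF that] constant_sum] \<open>F x = a 0\<close> by simp
    have "\<forall>\<^sub>F y in nhds x. F y = F x"
      using eventually_nhds_ball[OF \<open>0 < r\<close>, of x]
      by eventually_elim (rule const, simp add: dist_real_def abs_minus_commute)
    then show ?thesis ..
  qed
qed

lemma real_analytic_on_id: "real_analytic_on (\<lambda>x. x) UNIV"
  unfolding real_analytic_on_def
proof
  fix x :: real
  define a where "a n = (if n = 0 then x else if n = 1 then 1 else 0)" for n :: nat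
  have "(\<lambda>n. a n * (y - x) ^ n) sums y" for y
  proof -
    have "(\<lambda>n. a n * (y - x) ^ n) sums (\<Sum>n\<in>{0, 1}. a n * (y - x) ^ n)"
      by (rule sums_finite) (auto simp: a_def)
    then show ?thesis
      by (simp add: a_def)
  qed
  then show "\<exists>r>0. \<exists>a. \<forall>y. \<bar>y - x\<bar> < r \<longrightarrow> (\<lambda>n. a n * (y - x) ^ n) sums y"
    by (intro exI[of _ 1]) auto
qed

lemma open_Collect_eventually_nhds: "open {x. \<forall>\<^sub>F y in nhds x. P y}" (is "open ?Z")
proof (rule open_subopen[THEN iffD2], intro ballI)
  fix x assume "x \<in> ?Z"
  then have "\<forall>\<^sub>F y in nhds x. y \<in> ?Z"
    by (simp add: eventually_eventually)
  then obtain T where "open T" "x \<in> T" "\<forall>y\<in>T. y \<in> ?Z"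
    by (rule eventually_nhds[THEN iffD1, elim_format]) blast
  then show "\<exists>T. open T \<and> x \<in> T \<and> T \<subseteq> ?Z"
    by blast
qed

lemma open_Collect_eventually_at: "open {x :: 'a :: t1_space. \<forall>\<^sub>F y in at x. P y}" (is "open ?W")
proof (rule open_subopen[THEN iffD2], intro ballI)
  fix x assume "x \<in> ?W"
  then obtain T where "open T" "x \<in> T" and T: "\<forall>y\<in>T. y \<noteq> x \<longrightarrow> P y"
    unfolding eventually_at_topological by auto
  have "T \<subseteq> ?W"
  proof
    fix y assume "y \<in> T"
    show "y \<in> ?W"
    proof (cases "y = x")
      case True
      with \<open>x \<in> ?W\<close> show ?thesis
        by simp
    next
      case False
      have "\<forall>\<^sub>F z in nhds y. z \<in> T - {x}"
        using \<open>open T\<close> \<open>y \<in> T\<close> False by (intro eventually_nhds_in_open) auto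
      then have "\<forall>\<^sub>F z in nhds y. P z"
        by eventually_elim (use T in auto)
      then show ?thesis
        by (simp add: eventually_nhds_conv_at)
    qed
  qed
  with \<open>open T\<close> \<open>x \<in> T\<close> show "\<exists>T. open T \<and> x \<in> T \<and> T \<subseteq> ?W"
    by blast
qed

lemma real_analytic_on_level_set_cases:
  assumes "real_analytic_on F I" "x \<in> I"
  shows "(\<forall>\<^sub>F y in nhds x. F y = v) \<or> (\<forall>\<^sub>F y in at x. F y \<noteq> v)"
proof (cases "F x = v")
  case True
  from real_analytic_on_cases[OF assms] show ?thesis
  proof
    assume "\<exists>k\<ge>1. vanishing_order_le F x k"
    then have "\<forall>\<^sub>F y in at x. F y \<noteq> F x"
      using vanishing_order_le_imp_isolated by blast
    with True show ?thesis
      by simp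
  qed (use True in simp)
next
  case False
  have "(F \<longlongrightarrow> F x) (at x)"
    using real_analytic_on_imp_isCont[OF assms] by (simp add: isCont_def)
  then have "\<forall>\<^sub>F y in at x. F y \<noteq> v"
    using False by (rule tendsto_imp_eventually_ne)
  then show ?thesis ..
qed

lemma real_analytic_on_eventually_const_imp_const:
  assumes "open I" "connected I" and analytic: "real_analytic_on F I" and "c \<in> I"
    and const: "\<forall>\<^sub>F y in nhds c. F y = F c"
  shows "\<forall>x\<in>I. F x = F c"
proof -
  define Z where "Z = {x. \<forall>\<^sub>F y in nhds x. F y = F c}"
  define W where "W = {x. \<forall>\<^sub>F y in at x. F y \<noteq> F c}"
  have "open Z" "open W"
    unfolding Z_def W_def by (rule open_Collect_eventually_nhds open_Collect_eventually_at)+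
  have "x \<notin> W" if "x \<in> Z" for x
  proof
    assume "x \<in> W"
    have "\<forall>\<^sub>F y in at x. F y = F c"
      using \<open>x \<in> Z\<close> by (simp add: Z_def eventually_nhds_conv_at)
    moreover have "\<forall>\<^sub>F y in at x. F y \<noteq> F c"
      using \<open>x \<in> W\<close> by (simp add: W_def)
    ultimately have "\<forall>\<^sub>F y in at x. False"
      by eventually_elim simp
    then show False
      by (simp add: eventually_False)
  qed
  then have "Z \<inter> W \<inter> I = {}"
    by blast
  moreover have "I \<subseteq> Z \<union> W"
    using real_analytic_on_level_set_cases[OF analytic] by (auto simp: Z_def W_def)
  moreover have "Z \<inter> I \<noteq> {}"
    using const \<open>c \<in> I\<close> by (auto simp: Z_def)
  ultimately have "I \<subseteq> Z"
    using connectedD[OF \<open>connected I\<close> \<open>open Z\<close> \<open>open W\<close>] by blast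
  then show ?thesis
    unfolding Z_def by (auto dest: eventually_nhds_x_imp_x)
qed

section \<open>Completely non-Hoelder functions\<close>

lemma flat_poly_comp_imp_not_completely_non_holder:
  fixes P :: "real poly"
  assumes "continuous_on {0..1} f" "0 < degree P" and side: "unit_interval_side x0 S"
    and flat: "((\<lambda>x. poly P (f x)) has_real_derivative 0) (at x0 within S)"
  shows "\<not> completely_non_holder f"
proof -
  obtain k where "1 \<le> k" and order: "vanishing_order_le (poly P) (f x0) k"
    using vanishing_order_le_poly[OF \<open>0 < degree P\<close>] by blast
  have "holder_along f (1 / k) x0 (at x0 within S)"
    using holder_along_comp_imp_holder_along[OF tendsto_at_unit_interval_side[OF assms(1) side]
        order \<open>1 \<le> k\<close> zero_derivative_imp_holder_along_one[OF flat]] .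
  moreover have "0 < 1 / real k"
    using \<open>1 \<le> k\<close> by simp
  ultimately show ?thesis
    using side unfolding completely_non_holder_iff_sides by blast
qed

lemma not_completely_non_holder_imp_flat_poly_comp:
  assumes "\<not> completely_non_holder f"
  obtains P :: "real poly" and x0 S where "0 < degree P" "unit_interval_side x0 S"
    "((\<lambda>x. poly P (f x)) has_real_derivative 0) (at x0 within S)"
proof -
  obtain x0 S \<alpha> where side: "unit_interval_side x0 S" and "0 < \<alpha>"
    and holder: "holder_along f \<alpha> x0 (at x0 within S)"
    using assms unfolding completely_non_holder_iff_sides by blast
  obtain k :: nat where "1 / \<alpha> < k"
    using reals_Archimedean2 by blast
  then have k\<alpha>: "1 < real k * \<alpha>"
    using \<open>0 < \<alpha>\<close> by (simp add: field_simps)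
  then have "0 < k"
    by (cases k) auto
  define P where "P = [:- f x0, 1:] ^ k"
  have "0 < degree P"
    using \<open>0 < k\<close> by (simp add: P_def degree_linear_power)
  moreover have "(\<lambda>x. poly P (f x)) = (\<lambda>x. (f x - f x0) ^ k)"
    by (simp add: P_def poly_power)
  then have "((\<lambda>x. poly P (f x)) has_real_derivative 0) (at x0 within S)"
    using holder_along_imp_zero_derivative_power[OF holder k\<alpha>] by simp
  ultimately show ?thesis
    using side that by blast
qed

lemma completely_non_holder_comp_real_analytic:
  assumes "continuous_on {0..1} f" "completely_non_holder f"
    and "open I" "connected I" "f ` {0..1} \<subseteq> I" and analytic: "real_analytic_on F I"
    and "x \<in> I" "y \<in> I" "F x \<noteq> F y"
  shows "completely_non_holder (\<lambda>t. F (f t))"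
  unfolding completely_non_holder_iff_sides
proof (intro notI, elim exE conjE)
  fix x0 S \<alpha> assume side: "unit_interval_side x0 S" and "0 < \<alpha>"
    and holder: "holder_along (\<lambda>t. F (f t)) \<alpha> x0 (at x0 within S)"
  have "f x0 \<in> I"
    using side assms(5) unit_interval_side_mem by blast
  from real_analytic_on_cases[OF analytic this] show False
  proof
    assume "\<forall>\<^sub>F y in nhds (f x0). F y = F (f x0)"
    then have "\<forall>z\<in>I. F z = F (f x0)"
      using real_analytic_on_eventually_const_imp_const[OF assms(3,4) analytic \<open>f x0 \<in> I\<close>] by blast
    with assms(7-9) show False
      by simp
  next
    assume "\<exists>k\<ge>1. vanishing_order_le F (f x0) k"
    then obtain k where "1 \<le> k" and order: "vanishing_order_le F (f x0) k"
      by blast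
    have "holder_along f (\<alpha> / k) x0 (at x0 within S)"
      using holder_along_comp_imp_holder_along[OF tendsto_at_unit_interval_side[OF assms(1) side]
          order \<open>1 \<le> k\<close> holder] .
    moreover have "0 < \<alpha> / k"
      using \<open>0 < \<alpha>\<close> \<open>1 \<le> k\<close> by simp
    ultimately show False
      using assms(2) side unfolding completely_non_holder_iff_sides by blast
  qed
qed

lemma completely_non_holder_iff_no_flat_poly:
  assumes "continuous_on {0..1} f"
  shows "completely_non_holder f \<longleftrightarrow> (\<forall>P :: real poly. 0 < degree P \<longrightarrow>
    \<not> (\<exists>x0 S. unit_interval_side x0 S \<and> ((\<lambda>x. poly P (f x)) has_real_derivative 0) (at x0 within S)))"
proof (intro iffI allI impI notI; (elim exE conjE)?)
  fix P :: "real poly" and x0 S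
  assume "completely_non_holder f" "0 < degree P" "unit_interval_side x0 S"
    "((\<lambda>x. poly P (f x)) has_real_derivative 0) (at x0 within S)"
  with flat_poly_comp_imp_not_completely_non_holder[OF assms] show False
    by blast
next
  assume no_flat: "\<forall>P :: real poly. 0 < degree P \<longrightarrow>
    \<not> (\<exists>x0 S. unit_interval_side x0 S \<and> ((\<lambda>x. poly P (f x)) has_real_derivative 0) (at x0 within S))"
  show "completely_non_holder f"
  proof (rule ccontr)
    assume "\<not> completely_non_holder f"
    then obtain P :: "real poly" and x0 S where "0 < degree P" "unit_interval_side x0 S"
      "((\<lambda>x. poly P (f x)) has_real_derivative 0) (at x0 within S)"
      by (rule not_completely_non_holder_imp_flat_poly_comp)
    with no_flat show False
      by blast
  qed
qed

lemma completely_non_holder_iff_comp_real_analytic: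
  assumes "continuous_on {0..1} f"
  shows "completely_non_holder f \<longleftrightarrow> (\<forall>F :: real \<Rightarrow> real.
    (\<exists>I. open I \<and> is_interval I \<and> f ` {0..1} \<subseteq> I \<and> real_analytic_on F I \<and> (\<exists>x\<in>I. \<exists>y\<in>I. F x \<noteq> F y))
    \<longrightarrow> completely_non_holder (\<lambda>x. F (f x)))"
proof (intro iffI allI impI; (elim exE conjE bexE)?)
  fix F :: "real \<Rightarrow> real" and I x y
  assume "completely_non_holder f" "open I" "is_interval I" "f ` {0..1} \<subseteq> I" "real_analytic_on F I"
    "x \<in> I" "y \<in> I" "F x \<noteq> F y"
  then show "completely_non_holder (\<lambda>x. F (f x))"
    using completely_non_holder_comp_real_analytic[OF assms] is_interval_connected by blast
next
  assume "\<forall>F :: real \<Rightarrow> real.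
    (\<exists>I. open I \<and> is_interval I \<and> f ` {0..1} \<subseteq> I \<and> real_analytic_on F I \<and> (\<exists>x\<in>I. \<exists>y\<in>I. F x \<noteq> F y))
    \<longrightarrow> completely_non_holder (\<lambda>x. F (f x))"
  then have "(\<exists>I. open I \<and> is_interval I \<and> f ` {0..1} \<subseteq> I \<and> real_analytic_on (\<lambda>x. x) I \<and>
      (\<exists>x\<in>I. \<exists>y\<in>I. x \<noteq> (y :: real))) \<longrightarrow> completely_non_holder f"
    by (rule spec[of _ "\<lambda>x. x"])
  moreover have "\<exists>I. open I \<and> is_interval I \<and> f ` {0..1} \<subseteq> I \<and> real_analytic_on (\<lambda>x. x) I \<and>
      (\<exists>x\<in>I. \<exists>y\<in>I. x \<noteq> (y :: real))"
    using real_analytic_on_id by (intro exI[of _ UNIV]) (auto intro!: bexI[of _ 0] bexI[of _ 1])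
  ultimately show "completely_non_holder f"
    by blast
qed

theorem mainTheorem1:
  fixes f :: "real \<Rightarrow> real"
  assumes "continuous_on {0..1} f"
  shows "(completely_non_holder f
          \<longleftrightarrow> (\<forall>P :: real poly. degree P > 0 \<longrightarrow>
                 \<not> (\<exists>x0\<in>{0..1}.
                      (x0 < 1 \<and> ((\<lambda>x. poly P (f x)) has_real_derivative 0) (at_right x0)) \<or>
                      (0 < x0 \<and> ((\<lambda>x. poly P (f x)) has_real_derivative 0) (at_left x0)))))
       \<and> (completely_non_holder f
          \<longleftrightarrow> (\<forall>F :: real \<Rightarrow> real.
                 (\<exists>I. open I \<and> is_interval I \<and> f ` {0..1} \<subseteq> I \<and> real_analytic_on F I \<and>
                      (\<exists>x\<in>I. \<exists>y\<in>I. F x \<noteq> F y))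
                 \<longrightarrow> completely_non_holder (\<lambda>x. F (f x))))"
proof -
  note one_sided_flat = one_sided_at_unit_interval_iff[where
      P = "\<lambda>_ F. ((\<lambda>x. poly P (f x)) has_real_derivative 0) F" for P]
  show ?thesis
    unfolding one_sided_flat
    using completely_non_holder_iff_no_flat_poly[OF assms] completely_non_holder_iff_comp_real_analytic[OF assms]
    by (rule conjI)
qed

end
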